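(* Let $P\in\mathbb{N}_0^{n\times n}$ be an incidence matrix with $n\geq 3$. If $P$ is positive upper triangular, i.e. $P_{ij}=0$ for $i>j$ and $P_{ij}\geq 1$ for all $i\leq j$, then $P$ exclusively represents reducible morphisms.
   Context: Let $\Sigma=\{a_1,\dots,a_n\}$. A morphism $\varphi:\Sigma^+\to\Sigma^+$ (non-empty images) is Parikh-positive if every letter occurs in $\varphi(a_1)\cdots\varphi(a_n)$. Its incidence matrix is $P(\varphi)=(m_{i,j})$ with $m_{i,j}=|\varphi(a_j)|_{a_i}$. An automorphism is an injective morphism mapping each letter to a single letter; a morphism is reducible if it equals $\psi_2\circ\psi_1$ with neither $\psi_1,\psi_2$ an automorphism. An incidence matrix $P$ exclusively represents reducible morphisms if every Parikh-positive morphism $\varphi$ with $P(\varphi)=P$ is reducible. *)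

theory Defs
  imports Main
begin

text \<open>Alphabet \<Sigma> = {a_1,...,a_n} is represented by the letters 0..n-1 (type nat);
  words are lists of letters. A morphism \<Sigma>^+ \<rightarrow> \<Sigma>^+ is determined by the images
  of the letters, represented by a function h :: nat \<Rightarrow> nat list (only values
  on letters < n matter).\<close>

definition is_morphism :: "nat \<Rightarrow> (nat \<Rightarrow> nat list) \<Rightarrow> bool" where
  "is_morphism n h \<longleftrightarrow> (\<forall>a<n. h a \<noteq> [] \<and> set (h a) \<subseteq> {..<n})"

definition ext_morph :: "(nat \<Rightarrow> nat list) \<Rightarrow> nat list \<Rightarrow> nat list" where
  "ext_morph h w = concat (map h w)"

definition parikh_positive :: "nat \<Rightarrow> (nat \<Rightarrow> nat list) \<Rightarrow> bool" where
  "parikh_positive n h \<longleftrightarrow> (\<forall>i<n. i \<in> set (concat (map h [0..<n])))"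

definition is_automorphism :: "nat \<Rightarrow> (nat \<Rightarrow> nat list) \<Rightarrow> bool" where
  "is_automorphism n h \<longleftrightarrow> is_morphism n h \<and> (\<forall>a<n. length (h a) = 1) \<and> inj_on h {..<n}"

definition reducible :: "nat \<Rightarrow> (nat \<Rightarrow> nat list) \<Rightarrow> bool" where
  "reducible n \<phi> \<longleftrightarrow> (\<exists>\<psi>1 \<psi>2. is_morphism n \<psi>1 \<and> is_morphism n \<psi>2 \<and>
      \<not> is_automorphism n \<psi>1 \<and> \<not> is_automorphism n \<psi>2 \<and>
      (\<forall>a<n. \<phi> a = ext_morph \<psi>2 (\<psi>1 a)))"

definition has_incidence_matrix :: "nat \<Rightarrow> (nat \<Rightarrow> nat list) \<Rightarrow> (nat \<Rightarrow> nat \<Rightarrow> nat) \<Rightarrow> bool" where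
  "has_incidence_matrix n \<phi> P \<longleftrightarrow> (\<forall>i<n. \<forall>j<n. P i j = count_list (\<phi> j) i)"

definition exclusively_represents_reducible :: "nat \<Rightarrow> (nat \<Rightarrow> nat \<Rightarrow> nat) \<Rightarrow> bool" where
  "exclusively_represents_reducible n P \<longleftrightarrow>
     (\<forall>\<phi>. is_morphism n \<phi> \<and> parikh_positive n \<phi> \<and> has_incidence_matrix n \<phi> P \<longrightarrow> reducible n \<phi>)"

end

theory Submission
  imports Defs
begin

text \<open>Split off the last letter z = a_n: since P is upper triangular, z does not occur in
  the image of any other letter. Hence \<phi> factors as \<psi>2 \<circ> \<psi>1, where \<psi>1 agrees with \<phi>
  except that it fixes z, and \<psi>2 fixes every letter except z, which it sends to \<phi>(z).
  Neither factor is an automorphism, because \<phi>(a_2) contains a_1 and a_2, and \<phi>(z)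
  contains a_1 and z; this uses n \<ge> 3, so that a_2 \<noteq> z.\<close>

lemma ext_morph_fixing_letters:
  assumes "\<forall>x\<in>set w. h x = [x]"
  shows "ext_morph h w = w"
  using assms unfolding ext_morph_def by (induction w) auto

lemma length_ne_1_if_distinct_members:
  assumes "x \<in> set xs" "y \<in> set xs" "x \<noteq> y"
  shows "length xs \<noteq> 1"
  using assms by (cases xs) auto

lemma not_automorphism_if_image_not_letter:
  assumes "a < n" "length (h a) \<noteq> 1"
  shows "\<not> is_automorphism n h"
  using assms unfolding is_automorphism_def by blast

lemma reducible_if_letter_isolated:
  assumes \<phi>: "is_morphism n \<phi>" and z: "z < n"
    and isolated: "\<forall>a<n. a \<noteq> z \<longrightarrow> z \<notin> set (\<phi> a)"
    and b: "b < n" "b \<noteq> z" "length (\<phi> b) \<noteq> 1"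
    and long_z: "length (\<phi> z) \<noteq> 1"
  shows "reducible n \<phi>"
proof -
  define \<psi>1 where "\<psi>1 = \<phi>(z := [z])"
  define \<psi>2 where "\<psi>2 = (\<lambda>a. [a])(z := \<phi> z)"
  have "is_morphism n \<psi>1" "is_morphism n \<psi>2"
    using \<phi> z unfolding is_morphism_def \<psi>1_def \<psi>2_def by auto
  moreover have "\<not> is_automorphism n \<psi>1"
    using not_automorphism_if_image_not_letter[of b n \<psi>1] b by (simp add: \<psi>1_def)
  moreover have "\<not> is_automorphism n \<psi>2"
    using not_automorphism_if_image_not_letter[of z n \<psi>2] z long_z by (simp add: \<psi>2_def)
  moreover have "\<phi> a = ext_morph \<psi>2 (\<psi>1 a)" if "a < n" for a
  proof (cases "a = z")
    case True
    then show ?thesis by (simp add: \<psi>1_def \<psi>2_def ext_morph_def)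
  next
    case False
    then have "\<forall>x\<in>set (\<phi> a). \<psi>2 x = [x]"
      using isolated \<open>a < n\<close> by (auto simp: \<psi>2_def)
    then show ?thesis
      using False by (simp add: \<psi>1_def ext_morph_fixing_letters)
  qed
  ultimately show ?thesis
    unfolding reducible_def by blast
qed

lemma incidence_pos_imp_mem_image:
  assumes "has_incidence_matrix n \<phi> P" "i < n" "j < n" "P i j \<ge> 1"
  shows "i \<in> set (\<phi> j)"
  using assms unfolding has_incidence_matrix_def by (metis count_list_0_iff not_one_le_zero)

lemma incidence_zero_imp_not_mem_image:
  assumes "has_incidence_matrix n \<phi> P" "i < n" "j < n" "P i j = 0"
  shows "i \<notin> set (\<phi> j)"
  using assms unfolding has_incidence_matrix_def by (simp add: count_list_0_iff)

theorem proposition20: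
  fixes n :: nat and P :: "nat \<Rightarrow> nat \<Rightarrow> nat"
  assumes "n \<ge> 3"
    and "\<forall>i<n. \<forall>j<n. j < i \<longrightarrow> P i j = 0"
    and "\<forall>i<n. \<forall>j<n. i \<le> j \<longrightarrow> P i j \<ge> 1"
  shows "exclusively_represents_reducible n P"
  unfolding exclusively_represents_reducible_def
proof (intro allI impI)
  fix \<phi> assume "is_morphism n \<phi> \<and> parikh_positive n \<phi> \<and> has_incidence_matrix n \<phi> P"
  then have \<phi>: "is_morphism n \<phi>" and P: "has_incidence_matrix n \<phi> P"
    by auto
  have occurs: "i \<in> set (\<phi> j)" if "i \<le> j" "j < n" for i j
    using incidence_pos_imp_mem_image[OF P] assms(3) that by simp
  have isolated: "\<forall>a<n. a \<noteq> n - 1 \<longrightarrow> n - 1 \<notin> set (\<phi> a)"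
    using incidence_zero_imp_not_mem_image[OF P] assms(1,2) by simp
  show "reducible n \<phi>"
  proof (rule reducible_if_letter_isolated[OF \<phi> _ isolated, of 1])
    show "length (\<phi> 1) \<noteq> 1"
      using length_ne_1_if_distinct_members[OF occurs occurs, of 0 1 1] assms(1) by simp
    show "length (\<phi> (n - 1)) \<noteq> 1"
      using length_ne_1_if_distinct_members[OF occurs occurs, of 0 "n - 1" "n - 1"] assms(1)
      by simp
  qed (use assms(1) in auto)
qed

end
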